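(* Let $F$ be a field of characteristic $0$ and $k$ a positive integer. Then each of the following graded polynomials is a $\mathbb{Z}$-graded identity of $E^k$ (so the $T_{\mathbb{Z}}$-ideal $P^k$ they generate satisfies $P^k\subseteq T_{\mathbb{Z}}(E^k)$): (1) $x$ whenever $\alpha(x)<0$; (2) $[x_1,x_2,x_3]$ for every choice of the degrees; (3) if $k$ is even: $[y_1,y_2]\cdots[y_{k-1},y_k][y_{k+1},x]$ with $x$ of arbitrary degree; (4) if $k$ is odd: $[y_1,y_2]\cdots[y_{k-2},y_{k-1}][y_k,y_{k+1}]$; (5) for even $l\le k$: $g_{k-l+2}(z_1,\dots,z_{k-l+2})[u_1,u_2]\cdots[u_{l-1},u_l]$; (6) for odd $l\le k$: $[g_{k-l+2}(z_1,\dots,z_{k-l+2}),u_1][u_2,u_3]\cdots[u_{l-1},u_l]$; (7) for odd $l\le k$: $g_{k-l+2}(z_1,\dots,z_{k-l+2})[z_{k-l+3},u_1][u_2,u_3]\cdots[u_{l-1},u_l]$; where in (5)–(7) all $z_i$ have positive odd degree and all $u_i$ have even degree (each $u_i$ being either a degree-$0$ variable $y$ or a variable $z$ of positive even degree).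
   Context: $L$ is a vector space over $F$ with basis $e_1,e_2,\dots$, $E$ its unital Grassmann algebra (basis $1$ and $e_{i_1}\cdots e_{i_k}$, $i_1<\cdots<i_k$, with $e_ie_j=-e_je_i$). $E^k$ is $E$ with the $\mathbb{Z}$-grading induced by $\|e_i\|=0$ for $1\le i\le k$ and $\|e_i\|=1$ for $i\ge k+1$ (basis monomials get the sum of degrees of their factors; $1$ has degree $0$). Graded polynomials live in the free unital associative algebra on countably many variables of each integer degree, $\alpha(x)$ denoting the degree; the letters $y,y_i$ denote variables of degree $0$. A polynomial is a graded identity of a $\mathbb{Z}$-graded algebra $A$ if it vanishes under every substitution of each variable $x$ by an element of $A_{\alpha(x)}$. $[a,b]=ab-ba$, $[a,b,c]=[[a,b],c]$. Define $g_1(z_1)=z_1$ and, for $m\ge2$, $g_m(z_1,\dots,z_m)=\sum_T(-2)^{-|T|/2}f_T$, the sum over all subsets $T\subseteq\{1,\dots,m\}$ with $|T|$ even, where for $T=\{j_1<\cdots<j_t\}$ and $\{1,\dots,m\}\setminus T=\{i_1<\cdots<i_r\}$ one sets $f_T=z_{i_1}\cdots z_{i_r}[z_{j_1},z_{j_2}]\cdots[z_{j_{t-1}},z_{j_t}]$. *)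

theory Defs
  imports Main
begin

text \<open>Elements of the unital Grassmann algebra E over a field F on generators
  e_1, e_2, ... are represented by their coefficient functions: a monomial
  e_{i_1}...e_{i_k} (i_1 < ... < i_k) is the finite set {i_1,...,i_k} of
  positive naturals, the empty set being the unit 1.\<close>

type_synonym 'a grass = "nat set \<Rightarrow> 'a"

definition grass_carrier :: "'a::field grass set" where
  "grass_carrier = {a. finite {S. a S \<noteq> 0} \<and>
      (\<forall>S. a S \<noteq> 0 \<longrightarrow> finite S \<and> 0 \<notin> S)}"

definition gzero :: "'a::field grass" where
  "gzero = (\<lambda>S. 0)"

definition gone :: "'a::field grass" where
  "gone = (\<lambda>S. if S = {} then 1 else 0)"

definition gadd :: "'a::field grass \<Rightarrow> 'a grass \<Rightarrow> 'a grass" where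
  "gadd a b = (\<lambda>S. a S + b S)"

definition gsub :: "'a::field grass \<Rightarrow> 'a grass \<Rightarrow> 'a grass" where
  "gsub a b = (\<lambda>S. a S - b S)"

definition gscale :: "'a::field \<Rightarrow> 'a grass \<Rightarrow> 'a grass" where
  "gscale c a = (\<lambda>S. c * a S)"

text \<open>Sign of e_S e_T = sign * e_{S \<union> T} for disjoint S, T: number of inversions.\<close>
definition gsign :: "nat set \<Rightarrow> nat set \<Rightarrow> 'a::field" where
  "gsign S T = (-1) ^ card {(i, j). i \<in> S \<and> j \<in> T \<and> j < i}"

definition gmult :: "'a::field grass \<Rightarrow> 'a grass \<Rightarrow> 'a grass" where
  "gmult a b = (\<lambda>U. \<Sum>(S, T)\<in>{(S, T). a S \<noteq> 0 \<and> b T \<noteq> 0 \<and> S \<inter> T = {} \<and> S \<union> T = U}.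
                      gsign S T * a S * b T)"

definition gsum :: "('i \<Rightarrow> 'a::field grass) \<Rightarrow> 'i set \<Rightarrow> 'a grass" where
  "gsum f A = (\<lambda>U. \<Sum>i\<in>A. f i U)"

definition gcomm :: "'a::field grass \<Rightarrow> 'a grass \<Rightarrow> 'a grass" where
  "gcomm a b = gsub (gmult a b) (gmult b a)"

definition gprod :: "'a::field grass list \<Rightarrow> 'a grass" where
  "gprod xs = foldr gmult xs gone"

fun gcomm_prod :: "'a::field grass list \<Rightarrow> 'a grass" where
  "gcomm_prod [] = gone"
| "gcomm_prod [a] = a"
| "gcomm_prod (a # b # r) = gmult (gcomm a b) (gcomm_prod r)"

text \<open>The Z-grading of E^k: ||e_i|| = 0 for i \<le> k, 1 for i > k; E^k_n is the span of
  the monomials of degree n.\<close>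
definition Ek_comp :: "nat \<Rightarrow> int \<Rightarrow> 'a::field grass set" where
  "Ek_comp k n = {a \<in> grass_carrier. \<forall>S. a S \<noteq> 0 \<longrightarrow> int (card {i \<in> S. k < i}) = n}"

definition fT :: "nat \<Rightarrow> (nat \<Rightarrow> 'a::field grass) \<Rightarrow> nat set \<Rightarrow> 'a grass" where
  "fT m z T = gmult (gprod (map z (sorted_list_of_set ({1..m} - T))))
                    (gcomm_prod (map z (sorted_list_of_set T)))"

definition gpoly :: "nat \<Rightarrow> (nat \<Rightarrow> 'a::field grass) \<Rightarrow> 'a grass" where
  "gpoly m z = (if m = 1 then z 1 else
     gsum (\<lambda>T. gscale (inverse ((-2) ^ (card T div 2))) (fT m z T))
          {T. T \<subseteq> {1..m} \<and> even (card T)})"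

end

theory Submission
  imports Defs
begin

text \<open>
  Even elements are central and odd elements
  anticommute, so a commutator only depends on the odd parts of its arguments and is central;
  this already gives (2). Let F_r consist of the elements all of whose monomials contain at
  least r of the k generators e_1, ..., e_k of degree 0; then F_r F_s \<subseteq> F_(r+s) and
  F_(k+1) = 0. A monomial whose length has the wrong parity for its Z-degree contains such a
  generator, so odd parts of elements of even degree and even parts of elements of odd degree
  lie in F_1. Hence a commutator with an argument of even degree lies in F_1, and one between
  two such arguments in F_2.

  The remaining ingredient is that g_m(z_1, ..., z_m) lies in F_(m-1) when all z_i have odd
  degree. By multilinearity we may assume each z_i even (and then in F_1) or odd. If h_m denotes
  the part of the sum defining g_m over those odd T whose largest index carries an odd z_i, then
  g_(m+1) = (g_m - h_m) z_(m+1) = h_(m+1) when z_(m+1) is odd, while g_m and h_m are simply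
  multiplied by z_(m+1) when it is even. So g_m = h_m once an odd argument has occurred, and
  g_m = 0 once two have; with at most one odd argument, m - 1 arguments lie in F_1. In each of
  (3)-(7) the factors then account for at least k + 1 degree-zero generators.
\<close>

lemma grass_carrierI:
  assumes "finite {S. a S \<noteq> 0}" "\<And>S. a S \<noteq> 0 \<Longrightarrow> finite S \<and> 0 \<notin> S"
  shows "a \<in> grass_carrier"
  using assms unfolding grass_carrier_def by blast

lemma grass_carrierD:
  assumes "a \<in> grass_carrier" "a S \<noteq> 0"
  shows "finite S" "0 \<notin> S"
  using assms by (auto simp: grass_carrier_def)

lemma grass_carrier_finite_support: "a \<in> grass_carrier \<Longrightarrow> finite {S. a S \<noteq> 0}"
  by (auto simp: grass_carrier_def)

lemma grass_carrier_infinite: "a \<in> grass_carrier \<Longrightarrow> infinite U \<Longrightarrow> a U = 0"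
  using grass_carrierD(1) by blast

lemma grass_carrier_pointwise:
  assumes "a \<in> grass_carrier" "b \<in> grass_carrier" "\<And>S. a S = 0 \<Longrightarrow> b S = 0 \<Longrightarrow> c S = 0"
  shows "c \<in> grass_carrier"
proof (rule grass_carrierI)
  have "{S. c S \<noteq> 0} \<subseteq> {S. a S \<noteq> 0} \<union> {S. b S \<noteq> 0}"
    using assms(3) by blast
  then show "finite {S. c S \<noteq> 0}"
    using grass_carrier_finite_support[OF assms(1)] grass_carrier_finite_support[OF assms(2)]
    by (rule finite_subset[OF _ finite_UnI])
next
  fix S assume "c S \<noteq> 0"
  then have "a S \<noteq> 0 \<or> b S \<noteq> 0" using assms(3) by blast
  then show "finite S \<and> 0 \<notin> S"
    using grass_carrierD[OF assms(1)] grass_carrierD[OF assms(2)] by blast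
qed

lemma gmult_nonzeroE:
  assumes "gmult a b U \<noteq> 0"
  obtains S T where "a S \<noteq> 0" "b T \<noteq> 0" "S \<inter> T = {}" "S \<union> T = U"
proof -
  from assms obtain p where "p \<in> {(S, T). a S \<noteq> 0 \<and> b T \<noteq> 0 \<and> S \<inter> T = {} \<and> S \<union> T = U}"
    unfolding gmult_def by (rule sum.not_neutral_contains_not_neutral)
  then show ?thesis using that by auto
qed

lemma gzero_carrier [simp]: "gzero \<in> grass_carrier"
  by (simp add: grass_carrier_def gzero_def)

lemma gone_carrier [simp]: "gone \<in> grass_carrier"
  by (rule grass_carrierI) (auto simp: gone_def split: if_splits)

lemma gadd_carrier [simp]: "a \<in> grass_carrier \<Longrightarrow> b \<in> grass_carrier \<Longrightarrow> gadd a b \<in> grass_carrier"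
  by (rule grass_carrier_pointwise[of a b]) (simp_all add: gadd_def)

lemma gsub_carrier [simp]: "a \<in> grass_carrier \<Longrightarrow> b \<in> grass_carrier \<Longrightarrow> gsub a b \<in> grass_carrier"
  by (rule grass_carrier_pointwise[of a b]) (simp_all add: gsub_def)

lemma gscale_carrier [simp]: "a \<in> grass_carrier \<Longrightarrow> gscale c a \<in> grass_carrier"
  by (rule grass_carrier_pointwise[of a a]) (simp_all add: gscale_def)

lemma gmult_carrier [simp]:
  assumes a: "a \<in> grass_carrier" and b: "b \<in> grass_carrier"
  shows "gmult a b \<in> grass_carrier"
proof (rule grass_carrierI)
  have "{U. gmult a b U \<noteq> 0} \<subseteq> (\<lambda>(S, T). S \<union> T) ` ({S. a S \<noteq> 0} \<times> {T. b T \<noteq> 0})"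
    by (force elim: gmult_nonzeroE)
  then show "finite {U. gmult a b U \<noteq> 0}"
    using grass_carrier_finite_support[OF a] grass_carrier_finite_support[OF b]
    by (auto intro: finite_subset)
next
  fix U assume "gmult a b U \<noteq> 0"
  then obtain S T where "a S \<noteq> 0" "b T \<noteq> 0" "S \<union> T = U"
    by (rule gmult_nonzeroE)
  then show "finite U \<and> 0 \<notin> U"
    using grass_carrierD[OF a] grass_carrierD[OF b] by auto
qed

lemma gmult_eq_sum_Pow:
  assumes a: "a \<in> grass_carrier" and b: "b \<in> grass_carrier"
  shows "gmult a b U = (\<Sum>S\<in>Pow U. gsign S (U - S) * a S * b (U - S))"
proof (cases "finite U")
  case True
  let ?B = "{S \<in> Pow U. a S \<noteq> 0 \<and> b (U - S) \<noteq> 0}"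
  have eq: "{(S, T). a S \<noteq> 0 \<and> b T \<noteq> 0 \<and> S \<inter> T = {} \<and> S \<union> T = U} = (\<lambda>S. (S, U - S)) ` ?B"
  proof (intro set_eqI iffI)
    fix p assume "p \<in> {(S, T). a S \<noteq> 0 \<and> b T \<noteq> 0 \<and> S \<inter> T = {} \<and> S \<union> T = U}"
    then obtain S T where "p = (S, T)" "a S \<noteq> 0" "b T \<noteq> 0" "S \<inter> T = {}" "S \<union> T = U"
      by auto
    moreover from this have "T = U - S" by auto
    ultimately show "p \<in> (\<lambda>S. (S, U - S)) ` ?B" by auto
  qed auto
  have "gmult a b U = (\<Sum>S\<in>?B. gsign S (U - S) * a S * b (U - S))"
    unfolding gmult_def eq by (subst sum.reindex) (auto simp: inj_on_def)
  also have "\<dots> = (\<Sum>S\<in>Pow U. gsign S (U - S) * a S * b (U - S))"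
    by (rule sum.mono_neutral_left) (use True in auto)
  finally show ?thesis .
next
  case False
  then have "{(S, T). a S \<noteq> 0 \<and> b T \<noteq> 0 \<and> S \<inter> T = {} \<and> S \<union> T = U} = {}"
    using grass_carrierD(1)[OF a] grass_carrierD(1)[OF b] by auto
  with False show ?thesis unfolding gmult_def by (simp only: sum.empty) simp
qed

lemma gmult_eq_sum_Pow_swap:
  assumes "a \<in> grass_carrier" "b \<in> grass_carrier" "finite U"
  shows "gmult b a U = (\<Sum>S\<in>Pow U. gsign (U - S) S * a S * b (U - S))"
proof -
  have "gmult b a U = (\<Sum>S\<in>Pow U. gsign S (U - S) * b S * a (U - S))"
    using assms by (simp add: gmult_eq_sum_Pow)
  also have "\<dots> = (\<Sum>S\<in>Pow U. gsign (U - S) (U - (U - S)) * b (U - S) * a (U - (U - S)))"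
    by (rule sum.reindex_bij_witness[where i="\<lambda>S. U - S" and j="\<lambda>S. U - S"])
      (auto simp: double_diff)
  also have "\<dots> = (\<Sum>S\<in>Pow U. gsign (U - S) S * a S * b (U - S))"
    by (rule sum.cong) (auto simp: double_diff)
  finally show ?thesis .
qed

lemma gsign_empty [simp]: "gsign {} T = 1" "gsign S {} = 1"
  by (simp_all add: gsign_def)

lemma gsign_Un_left:
  assumes "finite A" "finite B" "finite T" "A \<inter> B = {}"
  shows "gsign (A \<union> B) T = (gsign A T * gsign B T :: 'a::field)"
proof -
  have e: "{(i, j). i \<in> A \<union> B \<and> j \<in> T \<and> j < i} =
    {(i, j). i \<in> A \<and> j \<in> T \<and> j < i} \<union> {(i, j). i \<in> B \<and> j \<in> T \<and> j < i}" by auto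
  have f1: "finite {(i, j). i \<in> A \<and> j \<in> T \<and> j < i}"
    by (rule finite_subset[of _ "A \<times> T"]) (use assms in auto)
  have f2: "finite {(i, j). i \<in> B \<and> j \<in> T \<and> j < i}"
    by (rule finite_subset[of _ "B \<times> T"]) (use assms in auto)
  show ?thesis unfolding gsign_def e
    by (subst card_Un_disjoint[OF f1 f2]) (use assms in \<open>auto simp: power_add\<close>)
qed

lemma gsign_Un_right:
  assumes "finite A" "finite B" "finite S" "A \<inter> B = {}"
  shows "gsign S (A \<union> B) = (gsign S A * gsign S B :: 'a::field)"
proof -
  have e: "{(i, j). i \<in> S \<and> j \<in> A \<union> B \<and> j < i} =
    {(i, j). i \<in> S \<and> j \<in> A \<and> j < i} \<union> {(i, j). i \<in> S \<and> j \<in> B \<and> j < i}" by auto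
  have f1: "finite {(i, j). i \<in> S \<and> j \<in> A \<and> j < i}"
    by (rule finite_subset[of _ "S \<times> A"]) (use assms in auto)
  have f2: "finite {(i, j). i \<in> S \<and> j \<in> B \<and> j < i}"
    by (rule finite_subset[of _ "S \<times> B"]) (use assms in auto)
  show ?thesis unfolding gsign_def e
    by (subst card_Un_disjoint[OF f1 f2]) (use assms in \<open>auto simp: power_add\<close>)
qed

lemma gsign_mult_swap:
  assumes "finite S" "finite T" "S \<inter> T = {}"
  shows "gsign S T * gsign T S = ((-1) ^ (card S * card T) :: 'a::field)"
proof -
  let ?X = "{(i, j). i \<in> S \<and> j \<in> T \<and> j < i}"
  let ?Y = "{(i, j). i \<in> S \<and> j \<in> T \<and> i < j}"
  have "{(i, j). i \<in> T \<and> j \<in> S \<and> j < i} = (\<lambda>(i, j). (j, i)) ` ?Y" by auto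
  then have cY: "card {(i, j). i \<in> T \<and> j \<in> S \<and> j < i} = card ?Y"
    by (simp add: card_image inj_on_def)
  have fX: "finite ?X" by (rule finite_subset[of _ "S \<times> T"]) (use assms in auto)
  have fY: "finite ?Y" by (rule finite_subset[of _ "S \<times> T"]) (use assms in auto)
  have "?X \<union> ?Y = S \<times> T"
    using assms(3) by (auto simp: linorder_neq_iff)
  moreover have "?X \<inter> ?Y = {}" by auto
  ultimately have "card ?X + card ?Y = card S * card T"
    using card_Un_disjoint[OF fX fY] by (simp add: card_cartesian_product)
  then show ?thesis unfolding gsign_def cY by (simp flip: power_add)
qed

lemma gsign_commute:
  assumes "finite S" "finite T" "S \<inter> T = {}"
  shows "gsign T S = ((-1) ^ (card S * card T) * gsign S T :: 'a::field)"
proof -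
  have "gsign T S = (gsign S T * gsign S T) * (gsign T S :: 'a)"
    by (simp add: gsign_def flip: power_add)
  also have "\<dots> = gsign S T * (-1) ^ (card S * card T)"
    by (simp add: mult.assoc gsign_mult_swap[OF assms])
  finally show ?thesis by (simp add: mult.commute)
qed

lemma gsign_cocycle:
  assumes "finite U" "P \<subseteq> V" "V \<subseteq> U"
  shows "gsign V (U - V) * gsign P (V - P) = (gsign P (U - P) * gsign (V - P) (U - V) :: 'a::field)"
proof -
  have fin: "finite P" "finite (V - P)" "finite (U - V)"
    using assms by (auto intro: finite_subset)
  have "gsign (P \<union> (V - P)) (U - V) = (gsign P (U - V) * gsign (V - P) (U - V) :: 'a)"
    by (rule gsign_Un_left) (use fin in auto)
  moreover have "gsign P ((V - P) \<union> (U - V)) = (gsign P (V - P) * gsign P (U - V) :: 'a)"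
    by (rule gsign_Un_right) (use fin in auto)
  moreover have "P \<union> (V - P) = V" "(V - P) \<union> (U - V) = U - P"
    using assms by auto
  ultimately show ?thesis by (simp add: mult_ac)
qed

lemma gmult_assoc:
  assumes a: "a \<in> grass_carrier" and b: "b \<in> grass_carrier" and c: "c \<in> grass_carrier"
  shows "gmult (gmult a b) c = gmult a (gmult b c)"
proof
  fix U
  show "gmult (gmult a b) c U = gmult a (gmult b c) U"
  proof (cases "finite U")
    case False
    then show ?thesis using a b c by (simp add: grass_carrier_infinite)
  next
    case True
    have "gmult (gmult a b) c U =
      (\<Sum>V\<in>Pow U. \<Sum>P\<in>Pow V. gsign V (U - V) * gsign P (V - P) * a P * b (V - P) * c (U - V))"
      by (simp add: gmult_eq_sum_Pow a b c sum_distrib_left sum_distrib_right mult_ac)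
    also have "\<dots> = (\<Sum>(V,P)\<in>Sigma (Pow U) Pow.
        gsign V (U - V) * gsign P (V - P) * a P * b (V - P) * c (U - V))"
      by (rule sum.Sigma) (auto simp: True intro: finite_subset[OF _ True])
    also have "\<dots> = (\<Sum>(P,Q)\<in>Sigma (Pow U) (\<lambda>P. Pow (U - P)).
        gsign P (U - P) * gsign Q (U - P - Q) * a P * b Q * c (U - P - Q))"
    proof (rule sum.reindex_bij_witness[where i="\<lambda>(P,Q). (P \<union> Q, P)" and j="\<lambda>(V,P). (P, V - P)"])
      fix x assume "x \<in> Sigma (Pow U) Pow"
      then obtain V P where x: "x = (V,P)" "V \<subseteq> U" "P \<subseteq> V" by auto
      moreover have "U - P - (V - P) = U - V"
        using x by auto
      then have "gsign P (U - P) * gsign (V - P) (U - P - (V - P)) * a P * b (V - P) * c (U - P - (V - P)) =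
          gsign V (U - V) * gsign P (V - P) * a P * b (V - P) * c (U - V)"
        by (simp only: gsign_cocycle[OF True x(3,2)])
      ultimately show "(case (case x of (V, P) \<Rightarrow> (P, V - P)) of
          (P, Q) \<Rightarrow> gsign P (U - P) * gsign Q (U - P - Q) * a P * b Q * c (U - P - Q)) =
        (case x of (V, P) \<Rightarrow> gsign V (U - V) * gsign P (V - P) * a P * b (V - P) * c (U - V))"
        by simp
    qed auto
    also have "\<dots> = (\<Sum>P\<in>Pow U. \<Sum>Q\<in>Pow (U - P).
        gsign P (U - P) * gsign Q (U - P - Q) * a P * b Q * c (U - P - Q))"
      by (rule sum.Sigma[symmetric]) (auto simp: True intro: finite_subset[OF _ True])
    also have "\<dots> = gmult a (gmult b c) U"
      by (simp add: gmult_eq_sum_Pow a b c sum_distrib_left sum_distrib_right mult_ac)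
    finally show ?thesis .
  qed
qed

lemma gmult_gone_left:
  assumes a: "a \<in> grass_carrier" shows "gmult gone a = a"
proof
  fix U show "gmult gone a U = a U"
  proof (cases "finite U")
    case False then show ?thesis using a by (simp add: grass_carrier_infinite)
  next
    case True
    have "gmult gone a U = (\<Sum>S\<in>Pow U. if S = {} then a (U - S) else 0)"
      unfolding gmult_eq_sum_Pow[OF gone_carrier a] by (rule sum.cong) (auto simp: gone_def)
    also have "\<dots> = a U" by (subst sum.delta) (use True in auto)
    finally show ?thesis .
  qed
qed

lemma gmult_gone_right:
  assumes a: "a \<in> grass_carrier" shows "gmult a gone = a"
proof
  fix U show "gmult a gone U = a U"
  proof (cases "finite U")
    case False then show ?thesis using a by (simp add: grass_carrier_infinite)
  next
    case True
    have "gmult a gone U = (\<Sum>S\<in>Pow U. if S = U then a S else 0)"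
      unfolding gmult_eq_sum_Pow[OF a gone_carrier]
    proof (rule sum.cong)
      fix S assume "S \<in> Pow U"
      then have "(U - S = {}) = (S = U)" by auto
      then show "gsign S (U - S) * a S * gone (U - S) = (if S = U then a S else 0)"
        by (auto simp: gone_def)
    qed simp
    also have "\<dots> = a U" by (subst sum.delta) (use True in auto)
    finally show ?thesis .
  qed
qed

lemma gmult_gadd_right:
  assumes "a \<in> grass_carrier" "b \<in> grass_carrier" "c \<in> grass_carrier"
  shows "gmult a (gadd b c) = gadd (gmult a b) (gmult a c)"
proof
  fix U show "gmult a (gadd b c) U = gadd (gmult a b) (gmult a c) U"
    by (subst gmult_eq_sum_Pow[OF assms(1) gadd_carrier[OF assms(2,3)]])
      (simp add: gadd_def gmult_eq_sum_Pow assms sum.distrib distrib_left)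
qed

lemma gmult_gadd_left:
  assumes "a \<in> grass_carrier" "b \<in> grass_carrier" "c \<in> grass_carrier"
  shows "gmult (gadd a b) c = gadd (gmult a c) (gmult b c)"
proof
  fix U show "gmult (gadd a b) c U = gadd (gmult a c) (gmult b c) U"
    by (subst gmult_eq_sum_Pow[OF gadd_carrier[OF assms(1,2)] assms(3)])
      (simp add: gadd_def gmult_eq_sum_Pow assms sum.distrib distrib_left distrib_right)
qed

lemma gmult_gscale_left:
  assumes "a \<in> grass_carrier" "b \<in> grass_carrier"
  shows "gmult (gscale c a) b = gscale c (gmult a b)"
proof
  fix U show "gmult (gscale c a) b U = gscale c (gmult a b) U"
    by (subst gmult_eq_sum_Pow[OF gscale_carrier[OF assms(1)] assms(2)])
      (simp add: gscale_def gmult_eq_sum_Pow assms sum_distrib_left mult_ac)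
qed

section \<open>The Grassmann algebra as a ring\<close>

typedef (overloaded) 'a grassmann = "grass_carrier :: 'a::field grass set"
  morphisms coeffs Abs_grassmann
  by (rule exI[of _ gzero]) simp

declare coeffs [simp] coeffs_inverse [simp] Abs_grassmann_inverse [simp]

lemma grassmann_eqI: "coeffs x = coeffs y \<Longrightarrow> x = y"
  by (simp add: coeffs_inject)

instantiation grassmann :: (field) ring_1
begin

definition "0 = Abs_grassmann gzero"
definition "1 = Abs_grassmann gone"
definition "x + y = Abs_grassmann (gadd (coeffs x) (coeffs y))"
definition "x - y = Abs_grassmann (gsub (coeffs x) (coeffs y))"
definition "- x = Abs_grassmann (gscale (-1) (coeffs x))"
definition "x * y = Abs_grassmann (gmult (coeffs x) (coeffs y))"

lemma coeffs_zero [simp]: "coeffs 0 = gzero"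
  and coeffs_one [simp]: "coeffs 1 = gone"
  and coeffs_plus [simp]: "coeffs (x + y) = gadd (coeffs x) (coeffs y)"
  and coeffs_minus [simp]: "coeffs (x - y) = gsub (coeffs x) (coeffs y)"
  and coeffs_uminus [simp]: "coeffs (- x) = gscale (-1) (coeffs x)"
  and coeffs_times [simp]: "coeffs (x * y) = gmult (coeffs x) (coeffs y)"
  by (simp_all add: zero_grassmann_def one_grassmann_def plus_grassmann_def minus_grassmann_def
      uminus_grassmann_def times_grassmann_def)

instance
proof
  fix a b c :: "'a grassmann"
  show "a * b * c = a * (b * c)" by (rule grassmann_eqI) (simp add: gmult_assoc)
  show "1 * a = a" by (rule grassmann_eqI) (simp add: gmult_gone_left)
  show "a * 1 = a" by (rule grassmann_eqI) (simp add: gmult_gone_right)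
  show "(a + b) * c = a * c + b * c" by (rule grassmann_eqI) (simp add: gmult_gadd_left)
  show "a * (b + c) = a * b + a * c" by (rule grassmann_eqI) (simp add: gmult_gadd_right)
  show "a + b + c = a + (b + c)" by (rule grassmann_eqI) (simp add: gadd_def add.assoc)
  show "a + b = b + a" by (rule grassmann_eqI) (simp add: gadd_def add.commute)
  show "0 + a = a" by (rule grassmann_eqI) (simp add: gadd_def gzero_def)
  show "- a + a = 0" by (rule grassmann_eqI) (simp add: gadd_def gzero_def gscale_def)
  show "a - b = a + - b" by (rule grassmann_eqI) (simp add: gadd_def gsub_def gscale_def)
  have "coeffs (0 :: 'a grassmann) {} \<noteq> coeffs 1 {}"
    by (simp add: gzero_def gone_def)
  then show "(0 :: 'a grassmann) \<noteq> 1" by metis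
qed

end

definition of_scalar :: "'a::field \<Rightarrow> 'a grassmann" where
  "of_scalar c = Abs_grassmann (gscale c gone)"

lemma coeffs_of_scalar: "coeffs (of_scalar c) = gscale c gone"
  by (simp add: of_scalar_def)

lemma of_scalar_add: "of_scalar (c + d) = of_scalar c + of_scalar d"
  by (rule grassmann_eqI) (simp add: coeffs_of_scalar gadd_def gscale_def distrib_right)

lemma of_scalar_uminus: "of_scalar (- c) = - of_scalar c"
  by (rule grassmann_eqI) (simp add: coeffs_of_scalar gscale_def)

lemma of_scalar_one: "of_scalar 1 = 1"
  by (rule grassmann_eqI) (simp add: coeffs_of_scalar gscale_def)

section \<open>Parity and the filtration by degree-zero generators\<close>

definition even_elem :: "'a::field grassmann \<Rightarrow> bool" where
  "even_elem x \<longleftrightarrow> (\<forall>S. coeffs x S \<noteq> 0 \<longrightarrow> even (card S))"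

definition odd_elem :: "'a::field grassmann \<Rightarrow> bool" where
  "odd_elem x \<longleftrightarrow> (\<forall>S. coeffs x S \<noteq> 0 \<longrightarrow> odd (card S))"

definition even_part :: "'a::field grassmann \<Rightarrow> 'a grassmann" where
  "even_part x = Abs_grassmann (\<lambda>S. if even (card S) then coeffs x S else 0)"

definition odd_part :: "'a::field grassmann \<Rightarrow> 'a grassmann" where
  "odd_part x = Abs_grassmann (\<lambda>S. if odd (card S) then coeffs x S else 0)"

lemma coeffs_even_part: "coeffs (even_part x) = (\<lambda>S. if even (card S) then coeffs x S else 0)"
  unfolding even_part_def
  by (rule Abs_grassmann_inverse, rule grass_carrier_pointwise[of "coeffs x" "coeffs x"]) auto

lemma coeffs_odd_part: "coeffs (odd_part x) = (\<lambda>S. if odd (card S) then coeffs x S else 0)"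
  unfolding odd_part_def
  by (rule Abs_grassmann_inverse, rule grass_carrier_pointwise[of "coeffs x" "coeffs x"]) auto

lemma even_part_add_odd_part: "even_part x + odd_part x = x"
  by (rule grassmann_eqI, rule ext) (simp add: coeffs_even_part coeffs_odd_part gadd_def)

lemma even_elem_even_part: "even_elem (even_part x)"
  by (simp add: even_elem_def coeffs_even_part)

lemma odd_elem_odd_part: "odd_elem (odd_part x)"
  by (simp add: odd_elem_def coeffs_odd_part)

lemma even_part_even_part [simp]: "even_part (even_part x) = even_part x"
  by (rule grassmann_eqI, rule ext) (simp add: coeffs_even_part)

lemma even_part_odd_part [simp]: "even_part (odd_part x) = 0"
  by (rule grassmann_eqI, rule ext) (simp add: coeffs_even_part coeffs_odd_part gzero_def)

lemma coeffs_mult_nonzeroE: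
  assumes "coeffs (x * y) U \<noteq> 0"
  obtains S T where "coeffs x S \<noteq> 0" "coeffs y T \<noteq> 0" "S \<inter> T = {}" "S \<union> T = U"
  using assms by (auto elim: gmult_nonzeroE)

lemma coeffs_nonzero_finite: "coeffs x S \<noteq> 0 \<Longrightarrow> finite S"
  using grass_carrierD(1)[OF coeffs] by blast

lemma coeffs_mult_nonzero_cardE:
  assumes "coeffs (x * y) U \<noteq> 0"
  obtains S T where "coeffs x S \<noteq> 0" "coeffs y T \<noteq> 0" "card U = card S + card T"
proof -
  obtain S T where "coeffs x S \<noteq> 0" "coeffs y T \<noteq> 0" "S \<inter> T = {}" "S \<union> T = U"
    using assms by (rule coeffs_mult_nonzeroE)
  with that show thesis
    using card_Un_disjoint coeffs_nonzero_finite by metis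
qed

lemma odd_elem_mult: "odd_elem x \<Longrightarrow> odd_elem y \<Longrightarrow> even_elem (x * y)"
  unfolding even_elem_def odd_elem_def by (metis coeffs_mult_nonzero_cardE odd_add)

lemma even_elem_diff: "even_elem x \<Longrightarrow> even_elem y \<Longrightarrow> even_elem (x - y)"
  unfolding even_elem_def by (simp add: gsub_def) metis

definition central :: "'a::times \<Rightarrow> bool" where
  "central x \<longleftrightarrow> (\<forall>y. x * y = y * x)"

lemma centralD: "central x \<Longrightarrow> x * y = y * x"
  by (simp add: central_def)

lemma central_one: "central (1 :: 'a::monoid_mult)"
  by (simp add: central_def)

lemma central_mult: "central x \<Longrightarrow> central y \<Longrightarrow> central (x * y :: 'a::semigroup_mult)"
  unfolding central_def by (metis mult.assoc)

text \<open>Since e_S e_(U-S) = (-1)^(|S| |U-S|) e_(U-S) e_S, monomials of even length are central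
  and two monomials of odd length anticommute.\<close>

lemma even_elem_central:
  assumes "even_elem x" shows "central x"
  unfolding central_def
proof (intro allI grassmann_eqI ext)
  fix y U
  show "coeffs (x * y) U = coeffs (y * x) U"
  proof (cases "finite U")
    case True
    have "coeffs (x * y) U = (\<Sum>S\<in>Pow U. gsign S (U - S) * coeffs x S * coeffs y (U - S))"
      by (simp add: gmult_eq_sum_Pow)
    also have "\<dots> = (\<Sum>S\<in>Pow U. gsign (U - S) S * coeffs x S * coeffs y (U - S))"
    proof (rule sum.cong)
      fix S assume S: "S \<in> Pow U"
      have "gsign (U - S) S = (-1) ^ (card S * card (U - S)) * (gsign S (U - S) :: 'a)"
        by (rule gsign_commute) (use S True in \<open>auto intro: finite_subset\<close>)
      then show "gsign S (U - S) * coeffs x S * coeffs y (U - S) =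
          gsign (U - S) S * coeffs x S * coeffs y (U - S)"
        using assms by (cases "coeffs x S = 0") (auto simp: even_elem_def)
    qed simp
    also have "\<dots> = coeffs (y * x) U"
      by (simp add: gmult_eq_sum_Pow_swap True)
    finally show ?thesis .
  qed (simp add: grass_carrier_infinite)
qed

lemma odd_elem_anticommute:
  assumes "odd_elem x" "odd_elem y" shows "x * y = - (y * x)"
proof (intro grassmann_eqI ext)
  fix U
  show "coeffs (x * y) U = coeffs (- (y * x)) U"
  proof (cases "finite U")
    case True
    have "coeffs (x * y) U = (\<Sum>S\<in>Pow U. gsign S (U - S) * coeffs x S * coeffs y (U - S))"
      by (simp add: gmult_eq_sum_Pow)
    also have "\<dots> = (\<Sum>S\<in>Pow U. - (gsign (U - S) S * coeffs x S * coeffs y (U - S)))"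
    proof (rule sum.cong)
      fix S assume S: "S \<in> Pow U"
      have "gsign (U - S) S = (-1) ^ (card S * card (U - S)) * (gsign S (U - S) :: 'a)"
        by (rule gsign_commute) (use S True in \<open>auto intro: finite_subset\<close>)
      then show "gsign S (U - S) * coeffs x S * coeffs y (U - S) =
          - (gsign (U - S) S * coeffs x S * coeffs y (U - S))"
        using assms by (cases "coeffs x S = 0 \<or> coeffs y (U - S) = 0") (auto simp: odd_elem_def)
    qed simp
    also have "\<dots> = - coeffs (y * x) U"
      by (simp add: gmult_eq_sum_Pow_swap True sum_negf)
    finally show ?thesis by (simp add: gscale_def)
  qed (simp add: grass_carrier_infinite gscale_def)
qed

definition commutator :: "'a::ring \<Rightarrow> 'a \<Rightarrow> 'a" where
  "commutator a b = a * b - b * a"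

lemma commutator_central_left: "central a \<Longrightarrow> commutator a b = 0"
  by (metis centralD commutator_def diff_self)

lemma commutator_central_right: "central b \<Longrightarrow> commutator a b = 0"
  by (metis centralD commutator_def diff_self)

lemma commutator_eq_odd_parts: "commutator x y = commutator (odd_part x) (odd_part y)"
proof -
  have "central (even_part x)" "central (even_part y)"
    by (simp_all add: even_elem_central even_elem_even_part)
  then have swap: "even_part x * even_part y = even_part y * even_part x"
    "even_part x * odd_part y = odd_part y * even_part x"
    "even_part y * odd_part x = odd_part x * even_part y"
    by (blast intro: centralD)+
  have "commutator x y = (even_part x + odd_part x) * (even_part y + odd_part y) -
      (even_part y + odd_part y) * (even_part x + odd_part x)"
    by (simp add: commutator_def even_part_add_odd_part)
  also have "\<dots> = commutator (odd_part x) (odd_part y)"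
    by (simp add: commutator_def distrib_left distrib_right swap)
  finally show ?thesis .
qed

lemma central_commutator: "central (commutator x y :: 'a::field grassmann)"
  by (subst commutator_eq_odd_parts)
    (auto simp: commutator_def intro: even_elem_central even_elem_diff odd_elem_mult odd_elem_odd_part)

text \<open>The generators e_1, ..., e_k are those of degree 0 in E^k; as there are only k of them,
  filtration k (k + 1) = 0.\<close>

definition filtration :: "nat \<Rightarrow> nat \<Rightarrow> 'a::field grassmann set" where
  "filtration k r = {x. \<forall>S. coeffs x S \<noteq> 0 \<longrightarrow> r \<le> card (S \<inter> {1..k})}"

lemma filtration_0 [simp]: "x \<in> filtration k 0"
  by (simp add: filtration_def)

lemma zero_mem_filtration [simp]: "0 \<in> filtration k r"
  by (simp add: filtration_def gzero_def)

lemma filtration_mono: "x \<in> filtration k s \<Longrightarrow> r \<le> s \<Longrightarrow> x \<in> filtration k r"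
  unfolding filtration_def by auto

lemma filtration_mult:
  assumes "x \<in> filtration k r" "y \<in> filtration k s"
  shows "x * y \<in> filtration k (r + s)"
  unfolding filtration_def
proof (intro CollectI allI impI)
  fix U assume "coeffs (x * y) U \<noteq> 0"
  then obtain S T where st: "coeffs x S \<noteq> 0" "coeffs y T \<noteq> 0" "S \<inter> T = {}" "S \<union> T = U"
    by (rule coeffs_mult_nonzeroE)
  then have "card (U \<inter> {1..k}) = card (S \<inter> {1..k}) + card (T \<inter> {1..k})"
    by (subst card_Un_disjoint[symmetric]) (auto intro!: arg_cong[where f = card])
  moreover have "r \<le> card (S \<inter> {1..k})" "s \<le> card (T \<inter> {1..k})"
    using assms st unfolding filtration_def by auto
  ultimately show "r + s \<le> card (U \<inter> {1..k})" by simp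
qed

lemma filtration_pointwise:
  assumes "x \<in> filtration k r" "y \<in> filtration k r"
    and "\<And>S. coeffs x S = 0 \<Longrightarrow> coeffs y S = 0 \<Longrightarrow> coeffs z S = 0"
  shows "z \<in> filtration k r"
  using assms unfolding filtration_def by blast

lemma filtration_add: "x \<in> filtration k r \<Longrightarrow> y \<in> filtration k r \<Longrightarrow> x + y \<in> filtration k r"
  by (rule filtration_pointwise[of x k r y]) (simp_all add: gadd_def)

lemma filtration_diff: "x \<in> filtration k r \<Longrightarrow> y \<in> filtration k r \<Longrightarrow> x - y \<in> filtration k r"
  by (rule filtration_pointwise[of x k r y]) (simp_all add: gsub_def)

lemma filtration_sum: "(\<And>i. i \<in> F \<Longrightarrow> f i \<in> filtration k r) \<Longrightarrow> sum f F \<in> filtration k r"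
  by (induction F rule: infinite_finite_induct) (auto intro: filtration_add)

lemma odd_part_mem_filtration: "x \<in> filtration k r \<Longrightarrow> odd_part x \<in> filtration k r"
  by (rule filtration_pointwise[of x k r x]) (simp_all add: coeffs_odd_part)

lemma filtration_eq_zero:
  assumes "x \<in> filtration k r" "k < r"
  shows "x = 0"
proof (intro grassmann_eqI ext)
  fix S
  have "card (S \<inter> {1..k}) \<le> k"
    using card_mono[of "{1..k}" "S \<inter> {1..k}"] by simp
  then show "coeffs x S = coeffs 0 S"
    using assms unfolding filtration_def by (auto simp: gzero_def)
qed

lemma commutator_mem_filtration:
  assumes "odd_part x \<in> filtration k r" "odd_part y \<in> filtration k s"
  shows "commutator x y \<in> filtration k (r + s)"
proof -
  have "odd_part x * odd_part y - odd_part y * odd_part x \<in> filtration k (r + s)"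
    using filtration_mult[OF assms] filtration_mult[OF assms(2,1)]
    by (auto intro: filtration_diff simp: add.commute)
  then show ?thesis
    by (subst commutator_eq_odd_parts) (simp add: commutator_def)
qed

fun commutator_prod :: "'a::ring_1 list \<Rightarrow> 'a" where
  "commutator_prod [] = 1"
| "commutator_prod [a] = a"
| "commutator_prod (a # b # r) = commutator a b * commutator_prod r"

lemma commutator_prod_append:
  "even (length xs) \<Longrightarrow> commutator_prod (xs @ ys) = commutator_prod xs * commutator_prod ys"
  by (induction xs rule: commutator_prod.induct) (simp_all add: mult.assoc)

lemma prod_list_map_upd_add:
  fixes w :: "'b \<Rightarrow> 'a::semiring_1"
  assumes "distinct L" "i \<in> set L"
  shows "prod_list (map (w(i := a + b)) L) = prod_list (map (w(i := a)) L) + prod_list (map (w(i := b)) L)"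
  using assms
proof (induction L)
  case (Cons j L)
  show ?case
  proof (cases "j = i")
    case True
    with Cons.prems have m: "map (w(i := v)) L = map w L" for v by simp
    from True show ?thesis by (simp only: list.map fun_upd_same m prod_list.Cons distrib_right)
  next
    case False
    with Cons show ?thesis by (simp add: distrib_left)
  qed
qed simp

lemma commutator_prod_map_upd_add:
  fixes w :: "'b \<Rightarrow> 'a::ring_1"
  assumes "distinct L" "i \<in> set L"
  shows "commutator_prod (map (w(i := a + b)) L) =
    commutator_prod (map (w(i := a)) L) + commutator_prod (map (w(i := b)) L)"
  using assms
proof (induction L rule: induct_list012)
  case (3 x y zs)
  consider "i = x" | "i = y" | "i \<noteq> x" "i \<noteq> y" by blast
  then show ?case
  proof cases
    case 1
    with "3.prems" have m: "map (w(x := v)) zs = map w zs" "(w(x := v)) y = w y" for v by auto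
    show ?thesis unfolding 1
      by (simp only: list.map fun_upd_same m commutator_prod.simps) (simp add: commutator_def algebra_simps)
  next
    case 2
    with "3.prems" have m: "map (w(y := v)) zs = map w zs" "(w(y := v)) x = w x" for v by auto
    show ?thesis unfolding 2
      by (simp only: list.map fun_upd_same m commutator_prod.simps) (simp add: commutator_def algebra_simps)
  next
    case 3
    with "3.prems" "3.IH"(1) show ?thesis by (simp add: algebra_simps)
  qed
qed auto

lemma central_commutator_prod:
  "even (length xs) \<Longrightarrow> central (commutator_prod (xs :: 'a::field grassmann list))"
  by (induction xs rule: commutator_prod.induct)
    (simp_all add: central_one central_mult central_commutator)

lemma prod_list_mem_filtration:
  "(\<And>i. i \<in> set L \<Longrightarrow> w i \<in> filtration k (r i)) \<Longrightarrow>
    prod_list (map w L) \<in> filtration k (sum_list (map r L))"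
  by (induction L) (simp_all add: filtration_mult)

lemma commutator_prod_mem_filtration:
  "(\<And>i. i \<in> set L \<Longrightarrow> w i \<in> filtration k (r i)) \<Longrightarrow>
    commutator_prod (map w L) \<in> filtration k (sum_list (map r L))"
proof (induction L rule: induct_list012)
  case (3 x y zs)
  have "w x * w y \<in> filtration k (r x + r y)" "w y * w x \<in> filtration k (r x + r y)"
    using filtration_mult[of "w x" k "r x" "w y" "r y"] filtration_mult[of "w y" k "r y" "w x" "r x"]
      "3.prems" by (simp_all add: add.commute)
  then have "commutator (w x) (w y) \<in> filtration k (r x + r y)"
    unfolding commutator_def by (rule filtration_diff)
  with "3" show ?case
    using filtration_mult by (fastforce simp: add.assoc)
qed simp_all

lemma commutator_prod_mem_filtration_odd_parts:
  "(\<And>x. x \<in> set xs \<Longrightarrow> odd_part x \<in> filtration k 1) \<Longrightarrow>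
    commutator_prod xs \<in> filtration k (2 * (length xs div 2))"
proof (induction xs rule: induct_list012)
  case (3 x y zs)
  then have "commutator x y \<in> filtration k (1 + 1)"
    by (intro commutator_mem_filtration) auto
  with "3" show ?case
    using filtration_mult by fastforce
qed simp_all

section \<open>The polynomials g_m evaluated in the Grassmann algebra\<close>

lemma finite_subset_atLeastAtMost: "T \<subseteq> {m..n} \<Longrightarrow> finite (T :: nat set)"
  by (rule rev_finite_subset[OF finite_atLeastAtMost])

lemma sorted_list_of_set_insert_greatest:
  assumes "finite T" "\<And>x. x \<in> T \<Longrightarrow> x < a"
  shows "sorted_list_of_set (insert a T) = sorted_list_of_set T @ [a :: 'a::linorder]"
proof (rule sorted_distinct_set_unique)
  show "sorted (sorted_list_of_set T @ [a])" "distinct (sorted_list_of_set T @ [a])"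
    using assms by (auto simp: sorted_append less_imp_le)
  have "set (sorted_list_of_set (insert a T)) = insert a T"
    by (rule set_sorted_list_of_set) (simp add: assms)
  then show "set (sorted_list_of_set (insert a T)) = set (sorted_list_of_set T @ [a])"
    using assms by simp
qed simp_all

lemma sorted_list_of_set_remove_Max:
  assumes "finite T" "T \<noteq> {}"
  shows "sorted_list_of_set T = sorted_list_of_set (T - {Max T}) @ [Max T :: 'a::linorder]"
proof -
  have "T = insert (Max T) (T - {Max T})"
    using Max_in[OF assms] by blast
  moreover have "x < Max T" if "x \<in> T - {Max T}" for x
    using that Max_ge[OF assms(1)] by fastforce
  ultimately show ?thesis
    using sorted_list_of_set_insert_greatest[of "T - {Max T}" "Max T"] assms(1) by simp
qed

lemma sum_subsets_insert:
  assumes "finite A" "a \<notin> A"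
  shows "(\<Sum>T | T \<subseteq> insert a A \<and> P T. f T) =
    (\<Sum>T | T \<subseteq> A \<and> P T. f T) + (\<Sum>T | T \<subseteq> A \<and> P (insert a T). f (insert a T))"
proof -
  let ?B = "{T. T \<subseteq> A \<and> P T}" and ?C = "{T. T \<subseteq> A \<and> P (insert a T)}"
  have "{T. T \<subseteq> insert a A \<and> P T} = ?B \<union> insert a ` ?C"
  proof (intro set_eqI iffI)
    fix T assume T: "T \<in> {T. T \<subseteq> insert a A \<and> P T}"
    show "T \<in> ?B \<union> insert a ` ?C"
    proof (cases "a \<in> T")
      case True
      with T have "T - {a} \<in> ?C" "T = insert a (T - {a})" by (auto simp: insert_absorb)
      then show ?thesis by blast
    qed (use T in auto)
  qed auto
  moreover have "finite ?B" "finite ?C"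
    using assms(1) by (auto intro: finite_subset[of _ "Pow A"])
  moreover have "?B \<inter> insert a ` ?C = {}" "inj_on (insert a) ?C"
    using assms(2) by (auto simp: inj_on_def)
  ultimately show ?thesis
    by (simp add: sum.union_disjoint sum.reindex)
qed

text \<open>The ring versions of fT and gpoly (see gpoly_eq_coeffs); h_poly is the auxiliary sum in the
  recursion for g_poly.\<close>

definition f_term :: "(nat \<Rightarrow> 'a::field grassmann) \<Rightarrow> nat \<Rightarrow> nat set \<Rightarrow> 'a grassmann" where
  "f_term w n T = prod_list (map w (sorted_list_of_set ({1..n} - T))) *
    commutator_prod (map w (sorted_list_of_set T))"

definition g_coeff :: "nat set \<Rightarrow> 'a::field grassmann" where
  "g_coeff T = of_scalar (inverse ((-2) ^ (card T div 2)))"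

definition g_poly :: "(nat \<Rightarrow> 'a::field grassmann) \<Rightarrow> nat \<Rightarrow> 'a grassmann" where
  "g_poly w n = (\<Sum>T | T \<subseteq> {1..n} \<and> even (card T). g_coeff T * f_term w n T)"

definition h_poly :: "(nat \<Rightarrow> 'a::field grassmann) \<Rightarrow> nat \<Rightarrow> 'a grassmann" where
  "h_poly w n = (\<Sum>T | T \<subseteq> {1..n} \<and> odd (card T) \<and> odd_elem (w (Max T)). g_coeff T * f_term w n T)"

lemma g_coeff_insert_even:
  "finite T \<Longrightarrow> a \<notin> T \<Longrightarrow> even (card T) \<Longrightarrow> g_coeff (insert a T) = g_coeff T"
  by (simp add: g_coeff_def)

lemma g_coeff_insert_odd:
  assumes "finite T" "a \<notin> T" "odd (card T)"
  shows "g_coeff (insert a T) * 2 = - (g_coeff T :: 'a::field_char_0 grassmann)"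
proof -
  obtain j where j: "card T = 2 * j + 1"
    using assms(3) oddE by blast
  then have "card (insert a T) div 2 = j + 1" "card T div 2 = j"
    using assms(1,2) by simp_all
  moreover have "inverse ((-2::'a) ^ (j + 1)) + inverse ((-2) ^ (j + 1)) = - inverse ((-2) ^ j)"
    by (simp add: field_simps)
  ultimately show ?thesis
    unfolding g_coeff_def mult_2_right by (metis of_scalar_add of_scalar_uminus)
qed

lemma f_term_Suc_notin:
  assumes "T \<subseteq> {1..n}"
  shows "f_term w (Suc n) T = prod_list (map w (sorted_list_of_set ({1..n} - T))) * w (Suc n) *
    commutator_prod (map w (sorted_list_of_set T))"
proof -
  have "{1..Suc n} - T = insert (Suc n) ({1..n} - T)"
    using assms by auto
  then have "sorted_list_of_set ({1..Suc n} - T) = sorted_list_of_set ({1..n} - T) @ [Suc n]"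
    by (metis sorted_list_of_set_insert_greatest finite_Diff finite_atLeastAtMost
        Diff_iff atLeastAtMost_iff le_imp_less_Suc)
  then show ?thesis unfolding f_term_def by simp
qed

lemma f_term_Suc_insert:
  assumes "T \<subseteq> {1..n}"
  shows "f_term w (Suc n) (insert (Suc n) T) = prod_list (map w (sorted_list_of_set ({1..n} - T))) *
    commutator_prod (map w (sorted_list_of_set T) @ [w (Suc n)])"
proof -
  have "{1..Suc n} - insert (Suc n) T = {1..n} - T"
    using assms by auto
  moreover have "sorted_list_of_set (insert (Suc n) T) = sorted_list_of_set T @ [Suc n]"
    using assms by (intro sorted_list_of_set_insert_greatest) (auto simp: finite_subset_atLeastAtMost)
  ultimately show ?thesis unfolding f_term_def by simp
qed

lemma commutator_prod_odd_split:
  assumes "finite (T :: nat set)" "odd (card T)"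
  shows "commutator_prod (map w (sorted_list_of_set T) @ ys) =
    commutator_prod (map w (sorted_list_of_set (T - {Max T}))) * commutator_prod (w (Max T) # ys)"
proof -
  have "T \<noteq> {}" using assms by auto
  then have "even (length (map w (sorted_list_of_set (T - {Max T}))))"
    using assms Max_in[OF assms(1)] by simp
  then show ?thesis
    by (subst sorted_list_of_set_remove_Max[OF assms(1) \<open>T \<noteq> {}\<close>])
      (simp add: commutator_prod_append[symmetric])
qed

lemma central_commutator_prod_remove_Max:
  fixes w :: "nat \<Rightarrow> 'a::field grassmann"
  assumes "finite T" "odd (card T)"
  shows "central (commutator_prod (map w (sorted_list_of_set (T - {Max T}))))"
proof -
  have "T \<noteq> {}" using assms by auto
  then show ?thesis
    using assms Max_in[OF assms(1)] by (intro central_commutator_prod) simp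
qed

lemma f_term_remove_Max:
  assumes "T \<subseteq> {1..n}" "odd (card T)"
  shows "f_term w n T = prod_list (map w (sorted_list_of_set ({1..n} - T))) *
    commutator_prod (map w (sorted_list_of_set (T - {Max T}))) * w (Max T)"
  using commutator_prod_odd_split[of T w "[]"] assms finite_subset[OF assms(1)]
  by (simp add: f_term_def mult.assoc)

lemma f_term_Suc_notin_even:
  assumes "T \<subseteq> {1..n}" "even (card T)"
  shows "f_term w (Suc n) T = f_term w n T * w (Suc n)"
proof -
  have "central (commutator_prod (map w (sorted_list_of_set T)))"
    using assms finite_subset[OF assms(1)] by (intro central_commutator_prod) simp
  then show ?thesis
    unfolding f_term_Suc_notin[OF assms(1)] by (simp add: f_term_def mult.assoc centralD)
qed

lemma f_term_Suc_notin_central: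
  assumes "T \<subseteq> {1..n}" "central (w (Suc n))"
  shows "f_term w (Suc n) T = f_term w n T * w (Suc n)"
  unfolding f_term_Suc_notin[OF assms(1)] by (simp add: f_term_def mult.assoc centralD[OF assms(2)])

text \<open>Here w (Suc n) has to be moved past the odd element w (Max T).\<close>

lemma f_term_Suc_notin_odd:
  assumes "T \<subseteq> {1..n}" "odd (card T)" "odd_elem (w (Suc n))" "odd_elem (w (Max T))"
  shows "f_term w (Suc n) T = - (f_term w n T * w (Suc n))"
proof -
  have fin: "finite T" using assms(1) by (rule finite_subset) simp
  let ?P = "prod_list (map w (sorted_list_of_set ({1..n} - T)))"
  let ?C = "commutator_prod (map w (sorted_list_of_set (T - {Max T})))"
  have "f_term w (Suc n) T = ?P * (w (Suc n) * ?C) * w (Max T)"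
    unfolding f_term_Suc_notin[OF assms(1)] commutator_prod_odd_split[OF fin assms(2), of w "[]", simplified]
    by (simp add: mult.assoc)
  also have "\<dots> = ?P * ?C * (w (Suc n) * w (Max T))"
    by (simp add: centralD[OF central_commutator_prod_remove_Max[OF fin assms(2)]] mult.assoc)
  also have "\<dots> = - (?P * ?C * w (Max T) * w (Suc n))"
    by (simp add: odd_elem_anticommute[OF assms(3,4)] mult.assoc)
  finally show ?thesis
    by (simp add: f_term_remove_Max[OF assms(1,2)])
qed

lemma f_term_Suc_insert_even:
  assumes "T \<subseteq> {1..n}" "even (card T)"
  shows "f_term w (Suc n) (insert (Suc n) T) = f_term w n T * w (Suc n)"
  unfolding f_term_Suc_insert[OF assms(1)] using assms finite_subset[OF assms(1)]
  by (simp add: f_term_def commutator_prod_append mult.assoc)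

lemma f_term_Suc_insert_odd:
  assumes "T \<subseteq> {1..n}" "odd (card T)"
  shows "f_term w (Suc n) (insert (Suc n) T) = prod_list (map w (sorted_list_of_set ({1..n} - T))) *
    commutator_prod (map w (sorted_list_of_set (T - {Max T}))) * commutator (w (Max T)) (w (Suc n))"
  unfolding f_term_Suc_insert[OF assms(1)]
    commutator_prod_odd_split[OF finite_subset[OF assms(1) finite_atLeastAtMost] assms(2)]
  by (simp add: mult.assoc)

lemma f_term_Suc_insert_odd_central:
  assumes "T \<subseteq> {1..n}" "odd (card T)" "central (w (Suc n)) \<or> central (w (Max T))"
  shows "f_term w (Suc n) (insert (Suc n) T) = 0"
proof -
  have "commutator (w (Max T)) (w (Suc n)) = 0"
    using assms(3) commutator_central_left commutator_central_right by blast
  then show ?thesis unfolding f_term_Suc_insert_odd[OF assms(1,2)] by simp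
qed

lemma f_term_Suc_insert_odd_odd:
  assumes "T \<subseteq> {1..n}" "odd (card T)" "odd_elem (w (Suc n))" "odd_elem (w (Max T))"
  shows "f_term w (Suc n) (insert (Suc n) T) = 2 * (f_term w n T * w (Suc n))"
proof -
  have "commutator (w (Max T)) (w (Suc n)) = w (Max T) * w (Suc n) + w (Max T) * w (Suc n)"
    by (simp add: commutator_def odd_elem_anticommute[OF assms(3,4)])
  then show ?thesis
    by (simp add: f_term_Suc_insert_odd[OF assms(1,2)] f_term_remove_Max[OF assms(1,2)]
        distrib_left mult.assoc mult_2)
qed

lemma sum_subsets_atLeastAtMost_Suc:
  "(\<Sum>T | T \<subseteq> {1..Suc n} \<and> P T. f T) =
    (\<Sum>T | T \<subseteq> {1..n} \<and> P T. f T) + (\<Sum>T | T \<subseteq> {1..n} \<and> P (insert (Suc n) T). f (insert (Suc n) T))"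
  using sum_subsets_insert[where A="{1..n}" and a="Suc n" and P=P and f=f]
  by (simp add: atLeastAtMostSuc_conv)

lemma card_insert_Suc_subset: "T \<subseteq> {1..n} \<Longrightarrow> card (insert (Suc n) T) = Suc (card T)"
  by (subst card_insert_disjoint) (auto simp: finite_subset_atLeastAtMost)

lemma Max_insert_Suc_subset: "T \<subseteq> {1..n} \<Longrightarrow> Max (insert (Suc n) T) = Suc n"
  by (rule Max_eqI) (auto simp: finite_subset_atLeastAtMost)

lemma Max_mem_atLeastAtMost:
  assumes "T \<subseteq> {1..n :: nat}" "odd (card T)"
  shows "Max T \<in> {1..n}"
proof -
  have "T \<noteq> {}" using assms(2) by auto
  then have "Max T \<in> T" by (rule Max_in[OF finite_subset_atLeastAtMost[OF assms(1)]])
  with assms(1) show ?thesis by blast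
qed

lemma g_coeff_mult_f_term_Suc_insert_even:
  assumes "T \<subseteq> {1..n}" "even (card T)"
  shows "g_coeff (insert (Suc n) T) * f_term w (Suc n) (insert (Suc n) T) = g_coeff T * f_term w n T * w (Suc n)"
proof -
  have "finite T" "Suc n \<notin> T"
    using assms(1) by (auto simp: finite_subset_atLeastAtMost)
  with assms show ?thesis
    by (simp add: f_term_Suc_insert_even g_coeff_insert_even mult.assoc)
qed

text \<open>This is where the coefficients (-2)^(-|T|/2) come from: they turn the factor 2 produced by
  the commutator of two odd elements into a sign.\<close>

lemma g_coeff_mult_f_term_Suc_insert_odd:
  fixes w :: "nat \<Rightarrow> 'a::field_char_0 grassmann"
  assumes homog: "\<forall>i\<in>{1..Suc n}. even_elem (w i) \<or> odd_elem (w i)"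
    and T: "T \<subseteq> {1..n}" "odd (card T)"
  shows "g_coeff (insert (Suc n) T) * f_term w (Suc n) (insert (Suc n) T) =
    (if odd_elem (w (Suc n)) \<and> odd_elem (w (Max T)) then - (g_coeff T * f_term w n T * w (Suc n)) else 0)"
proof (cases "odd_elem (w (Suc n)) \<and> odd_elem (w (Max T))")
  case True
  have "finite T" "Suc n \<notin> T"
    using T(1) by (auto simp: finite_subset_atLeastAtMost)
  then have "g_coeff (insert (Suc n) T) * f_term w (Suc n) (insert (Suc n) T) =
      (g_coeff (insert (Suc n) T) * 2) * (f_term w n T * w (Suc n))"
    using True by (simp add: f_term_Suc_insert_odd_odd[OF T] mult.assoc)
  with True show ?thesis
    by (simp add: g_coeff_insert_odd[OF \<open>finite T\<close> \<open>Suc n \<notin> T\<close> T(2)] mult.assoc)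
next
  case False
  have "Suc n \<in> {1..Suc n}" "Max T \<in> {1..Suc n}"
    using Max_mem_atLeastAtMost[OF T] by auto
  with homog False have "central (w (Suc n)) \<or> central (w (Max T))"
    using even_elem_central by blast
  then have "f_term w (Suc n) (insert (Suc n) T) = 0"
    by (rule f_term_Suc_insert_odd_central[OF T])
  with False show ?thesis
    by (subst if_not_P) simp_all
qed

lemma g_poly_Suc:
  fixes w :: "nat \<Rightarrow> 'a::field_char_0 grassmann"
  assumes homog: "\<forall>i\<in>{1..Suc n}. even_elem (w i) \<or> odd_elem (w i)"
  shows "g_poly w (Suc n) =
    (if odd_elem (w (Suc n)) then (g_poly w n - h_poly w n) * w (Suc n) else g_poly w n * w (Suc n))"
proof -
  let ?A = "{T. T \<subseteq> {1..n} \<and> even (card T)}"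
  let ?B = "{T. T \<subseteq> {1..n} \<and> odd (card T)}"
  have B: "{T. T \<subseteq> {1..n} \<and> even (card (insert (Suc n) T))} = ?B"
    using card_insert_Suc_subset by fastforce
  have "(\<Sum>T\<in>?A. g_coeff T * f_term w (Suc n) T) = g_poly w n * w (Suc n)"
    unfolding g_poly_def sum_distrib_right
    by (rule sum.cong) (simp_all add: f_term_Suc_notin_even mult.assoc)
  moreover have "(\<Sum>T\<in>?B. g_coeff (insert (Suc n) T) * f_term w (Suc n) (insert (Suc n) T)) =
      (\<Sum>T\<in>?B. if odd_elem (w (Suc n)) \<and> odd_elem (w (Max T))
        then - (g_coeff T * f_term w n T * w (Suc n)) else 0)"
    by (rule sum.cong) (simp_all add: g_coeff_mult_f_term_Suc_insert_odd[OF homog])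
  moreover have "\<dots> = (if odd_elem (w (Suc n)) then - (h_poly w n * w (Suc n)) else 0)"
  proof (cases "odd_elem (w (Suc n))")
    case True
    have "{T. T \<subseteq> {1..n} \<and> odd (card T) \<and> odd_elem (w (Max T))} = {T \<in> ?B. odd_elem (w (Max T))}"
      by auto
    moreover have "finite ?B" by (rule finite_subset[of _ "Pow {1..n}"]) auto
    ultimately have "h_poly w n = (\<Sum>T\<in>?B. if odd_elem (w (Max T)) then g_coeff T * f_term w n T else 0)"
      unfolding h_poly_def by (simp only: sum.inter_filter)
    with True show ?thesis
      by (simp add: sum_distrib_right flip: sum_negf) (rule sum.cong; simp)
  qed simp
  ultimately show ?thesis
    unfolding g_poly_def[of w "Suc n"] sum_subsets_atLeastAtMost_Suc B
    by (simp add: g_poly_def algebra_simps)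
qed

lemma h_poly_Suc:
  fixes w :: "nat \<Rightarrow> 'a::field_char_0 grassmann"
  assumes homog: "\<forall>i\<in>{1..Suc n}. even_elem (w i) \<or> odd_elem (w i)"
  shows "h_poly w (Suc n) =
    (if odd_elem (w (Suc n)) then (g_poly w n - h_poly w n) * w (Suc n) else h_poly w n * w (Suc n))"
proof -
  let ?A = "{T. T \<subseteq> {1..n} \<and> even (card T)}"
  let ?F = "{T. T \<subseteq> {1..n} \<and> odd (card T) \<and> odd_elem (w (Max T))}"
  have "(T \<subseteq> {1..n} \<and> odd (card (insert (Suc n) T)) \<and> odd_elem (w (Max (insert (Suc n) T)))) =
      (T \<subseteq> {1..n} \<and> even (card T) \<and> odd_elem (w (Suc n)))" for T
    by (cases "T \<subseteq> {1..n}") (simp_all add: card_insert_Suc_subset Max_insert_Suc_subset)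
  then have "{T. T \<subseteq> {1..n} \<and> odd (card (insert (Suc n) T)) \<and> odd_elem (w (Max (insert (Suc n) T)))} =
      (if odd_elem (w (Suc n)) then ?A else {})"
    by auto
  then have split: "h_poly w (Suc n) = (\<Sum>T\<in>?F. g_coeff T * f_term w (Suc n) T) +
      (if odd_elem (w (Suc n)) then
        (\<Sum>T\<in>?A. g_coeff (insert (Suc n) T) * f_term w (Suc n) (insert (Suc n) T)) else 0)"
    unfolding h_poly_def sum_subsets_atLeastAtMost_Suc by simp
  show ?thesis
  proof (cases "odd_elem (w (Suc n))")
    case False
    then have "central (w (Suc n))"
      using bspec[OF homog, of "Suc n"] even_elem_central by simp
    then have "(\<Sum>T\<in>?F. g_coeff T * f_term w (Suc n) T) = h_poly w n * w (Suc n)"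
      by (simp add: h_poly_def f_term_Suc_notin_central sum_distrib_right mult.assoc)
    with split False show ?thesis by simp
  next
    case True
    have "(\<Sum>T\<in>?F. g_coeff T * f_term w (Suc n) T) = - (h_poly w n * w (Suc n))"
      by (simp add: h_poly_def f_term_Suc_notin_odd True sum_negf sum_distrib_right mult.assoc)
    moreover have "(\<Sum>T\<in>?A. g_coeff (insert (Suc n) T) * f_term w (Suc n) (insert (Suc n) T)) =
        g_poly w n * w (Suc n)"
      unfolding g_poly_def sum_distrib_right
      by (rule sum.cong) (simp_all add: g_coeff_mult_f_term_Suc_insert_even)
    ultimately show ?thesis using split True by (simp add: algebra_simps)
  qed
qed

lemma g_poly_h_poly_odd_arguments:
  fixes w :: "nat \<Rightarrow> 'a::field_char_0 grassmann"
  assumes "\<forall>i\<in>{1..n}. even_elem (w i) \<or> odd_elem (w i)"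
  shows "(1 \<le> card {i \<in> {1..n}. odd_elem (w i)} \<longrightarrow> g_poly w n = h_poly w n) \<and>
    (2 \<le> card {i \<in> {1..n}. odd_elem (w i)} \<longrightarrow> g_poly w n = 0)"
  using assms
proof (induction n)
  case (Suc n)
  have IH: "(1 \<le> card {i \<in> {1..n}. odd_elem (w i)} \<longrightarrow> g_poly w n = h_poly w n) \<and>
      (2 \<le> card {i \<in> {1..n}. odd_elem (w i)} \<longrightarrow> g_poly w n = 0)"
    by (rule Suc.IH) (use Suc.prems in simp)
  have odd_set: "{i \<in> {1..Suc n}. odd_elem (w i)} =
      (if odd_elem (w (Suc n)) then insert (Suc n) {i \<in> {1..n}. odd_elem (w i)}
       else {i \<in> {1..n}. odd_elem (w i)})"
    by (auto simp: le_Suc_eq)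
  show ?case
  proof (cases "odd_elem (w (Suc n))")
    case True
    then have card: "card {i \<in> {1..Suc n}. odd_elem (w i)} = Suc (card {i \<in> {1..n}. odd_elem (w i)})"
      unfolding odd_set by simp
    have "g_poly w (Suc n) = h_poly w (Suc n)"
      using True g_poly_Suc[OF Suc.prems] h_poly_Suc[OF Suc.prems] by simp
    moreover have "g_poly w (Suc n) = 0" if "2 \<le> card {i \<in> {1..Suc n}. odd_elem (w i)}"
    proof -
      from that card IH have "g_poly w n = h_poly w n" by simp
      with True show ?thesis using g_poly_Suc[OF Suc.prems] by simp
    qed
    ultimately show ?thesis by blast
  next
    case False
    then show ?thesis
      using IH g_poly_Suc[OF Suc.prems] h_poly_Suc[OF Suc.prems] unfolding odd_set by auto
  qed
qed simp

lemma f_term_mem_filtration: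
  assumes "\<And>i. i \<in> {1..n} \<Longrightarrow> w i \<in> filtration k (r i)" "T \<subseteq> {1..n}"
  shows "f_term w n T \<in> filtration k (sum r {1..n})"
proof -
  have fin: "finite T" using assms(2) by (rule finite_subset_atLeastAtMost)
  have "prod_list (map w (sorted_list_of_set ({1..n} - T))) \<in> filtration k (sum r ({1..n} - T))"
    using prod_list_mem_filtration[of "sorted_list_of_set ({1..n} - T)" w k r] assms(1)
    by (simp add: sum_list_distinct_conv_sum_set)
  moreover have "commutator_prod (map w (sorted_list_of_set T)) \<in>
      filtration k (sum_list (map r (sorted_list_of_set T)))"
    using assms fin by (intro commutator_prod_mem_filtration) auto
  then have "commutator_prod (map w (sorted_list_of_set T)) \<in> filtration k (sum r T)"
    using fin by (simp add: sum_list_distinct_conv_sum_set)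
  moreover have "sum r {1..n} = sum r ({1..n} - T) + sum r T"
    using assms(2) by (simp add: sum.subset_diff)
  ultimately show ?thesis
    unfolding f_term_def using filtration_mult by metis
qed

lemma g_poly_mem_filtration_sum:
  assumes "\<And>i. i \<in> {1..n} \<Longrightarrow> w i \<in> filtration k (r i)"
  shows "g_poly w n \<in> filtration k (sum r {1..n})"
  unfolding g_poly_def
proof (rule filtration_sum)
  fix T assume "T \<in> {T. T \<subseteq> {1..n} \<and> even (card T)}"
  then have "T \<subseteq> {1..n}" by simp
  with assms have "f_term w n T \<in> filtration k (sum r {1..n})"
    by (rule f_term_mem_filtration)
  then show "g_coeff T * f_term w n T \<in> filtration k (sum r {1..n})"
    using filtration_mult[of "g_coeff T" k 0] by simp
qed

lemma g_poly_mem_filtration_homogeneous: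
  fixes w :: "nat \<Rightarrow> 'a::field_char_0 grassmann"
  assumes "\<forall>i\<in>{1..n}. (even_elem (w i) \<and> w i \<in> filtration k 1) \<or> odd_elem (w i)"
  shows "g_poly w n \<in> filtration k (n - 1)"
proof (cases "2 \<le> card {i \<in> {1..n}. odd_elem (w i)}")
  case True
  have "\<forall>i\<in>{1..n}. even_elem (w i) \<or> odd_elem (w i)"
    using assms by blast
  from conjunct2[OF g_poly_h_poly_odd_arguments[OF this]] True have "g_poly w n = 0"
    by (rule mp)
  then show ?thesis by simp
next
  case False
  define r where "r i = (if w i \<in> filtration k 1 then 1 else (0::nat))" for i
  let ?B = "{i \<in> {1..n}. w i \<notin> filtration k 1}"
  have "?B \<subseteq> {i \<in> {1..n}. odd_elem (w i)}"
    using assms by blast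
  then have "card ?B \<le> card {i \<in> {1..n}. odd_elem (w i)}"
    by (rule card_mono[rotated]) simp
  with False have "card ?B \<le> 1" by linarith
  have "sum r {1..n} = sum r ({1..n} - ?B) + sum r ?B"
    by (rule sum.subset_diff) auto
  also have "sum r ({1..n} - ?B) = card ({1..n} - ?B)"
    by (simp add: r_def)
  also have "\<dots> = n - card ?B"
    by (subst card_Diff_subset) auto
  finally have "n - 1 \<le> sum r {1..n}"
    using \<open>card ?B \<le> 1\<close> by linarith
  moreover have "g_poly w n \<in> filtration k (sum r {1..n})"
    by (rule g_poly_mem_filtration_sum) (simp add: r_def)
  ultimately show ?thesis by (simp add: filtration_mono)
qed

lemma f_term_fun_upd_add:
  assumes "i \<in> {1..n}" "T \<subseteq> {1..n}"
  shows "f_term (w(i := a + b)) n T = f_term (w(i := a)) n T + f_term (w(i := b)) n T"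
proof -
  have fin: "finite T" using assms(2) by (rule finite_subset_atLeastAtMost)
  show ?thesis
  proof (cases "i \<in> T")
    case True
    then have m: "map (w(i := v)) (sorted_list_of_set ({1..n} - T)) =
        map w (sorted_list_of_set ({1..n} - T))" for v
      by simp
    from True fin show ?thesis
      using commutator_prod_map_upd_add[of "sorted_list_of_set T" i w a b]
      unfolding f_term_def m by (simp add: distrib_left)
  next
    case False
    then have m: "map (w(i := v)) (sorted_list_of_set T) = map w (sorted_list_of_set T)" for v
      using fin by simp
    from False assms(1) show ?thesis
      using prod_list_map_upd_add[of "sorted_list_of_set ({1..n} - T)" i w a b]
      unfolding f_term_def m by (simp add: distrib_right)
  qed
qed

lemma g_poly_fun_upd_add:
  "i \<in> {1..n} \<Longrightarrow> g_poly (w(i := a + b)) n = g_poly (w(i := a)) n + g_poly (w(i := b)) n"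
  unfolding g_poly_def sum.distrib[symmetric]
  by (rule sum.cong) (simp_all add: f_term_fun_upd_add distrib_left)

text \<open>Splitting each argument into its even and odd part reduces this, by multilinearity,
  to the homogeneous case.\<close>

lemma g_poly_mem_filtration:
  fixes w :: "nat \<Rightarrow> 'a::field_char_0 grassmann"
  assumes "\<forall>i\<in>{1..n}. even_part (w i) \<in> filtration k 1"
  shows "g_poly w n \<in> filtration k (n - 1)"
proof -
  define good where "good x \<longleftrightarrow> (even_elem x \<and> x \<in> filtration k 1) \<or> odd_elem x"
    for x :: "'a grassmann"
  have "g_poly w n \<in> filtration k (n - 1)"
    if "card {i \<in> {1..n}. \<not> good (w i)} = N" "\<forall>i\<in>{1..n}. even_part (w i) \<in> filtration k 1"
    for N w
    using that
  proof (induction N arbitrary: w)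
    case 0
    then show ?case
      by (intro g_poly_mem_filtration_homogeneous) (auto simp: good_def)
  next
    case (Suc N)
    then obtain i where i: "i \<in> {1..n}" "\<not> good (w i)"
      by (metis (no_types, lifting) Collect_empty_eq card.empty nat.distinct(1))
    define w1 where "w1 = w(i := even_part (w i))"
    define w2 where "w2 = w(i := odd_part (w i))"
    have "g_poly w n = g_poly (w(i := even_part (w i) + odd_part (w i))) n"
      by (simp add: even_part_add_odd_part)
    then have split: "g_poly w n = g_poly w1 n + g_poly w2 n"
      unfolding w1_def w2_def using g_poly_fun_upd_add[OF i(1)] by simp
    have "good (even_part (w i))" "good (odd_part (w i))"
      using Suc.prems(2) i(1) by (simp_all add: good_def even_elem_even_part odd_elem_odd_part)
    then have "{j \<in> {1..n}. \<not> good (w1 j)} = {j \<in> {1..n}. \<not> good (w j)} - {i}"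
      "{j \<in> {1..n}. \<not> good (w2 j)} = {j \<in> {1..n}. \<not> good (w j)} - {i}"
      unfolding w1_def w2_def by auto
    moreover have "card ({j \<in> {1..n}. \<not> good (w j)} - {i}) = N"
      using Suc.prems(1) i by simp
    moreover have "\<forall>j\<in>{1..n}. even_part (w1 j) \<in> filtration k 1"
      "\<forall>j\<in>{1..n}. even_part (w2 j) \<in> filtration k 1"
      unfolding w1_def w2_def using Suc.prems(2) by simp_all
    ultimately show ?case
      unfolding split by (intro filtration_add Suc.IH) simp_all
  qed
  with assms show ?thesis by blast
qed

lemma coeffs_sum: "coeffs (sum f S) U = (\<Sum>i\<in>S. coeffs (f i) U)"
  by (induction S rule: infinite_finite_induct) (simp_all add: gzero_def gadd_def)

lemma gsum_coeffs: "gsum (\<lambda>i. coeffs (f i)) S = coeffs (sum f S)"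
  by (rule ext) (simp add: gsum_def coeffs_sum)

lemma gprod_map_coeffs: "gprod (map coeffs xs) = coeffs (prod_list xs)"
  by (induction xs) (simp_all add: gprod_def)

lemma gcomm_coeffs: "gcomm (coeffs a) (coeffs b) = coeffs (commutator a b)"
  by (simp add: gcomm_def commutator_def)

lemma gcomm_prod_map_coeffs: "gcomm_prod (map coeffs xs) = coeffs (commutator_prod xs)"
  by (induction xs rule: commutator_prod.induct) (simp_all add: gcomm_coeffs)

lemma gcomm_eq_coeffs:
  "x \<in> grass_carrier \<Longrightarrow> y \<in> grass_carrier \<Longrightarrow>
    gcomm x y = coeffs (commutator (Abs_grassmann x) (Abs_grassmann y))"
  using gcomm_coeffs[of "Abs_grassmann x" "Abs_grassmann y"] by simp

lemma gcomm_prod_eq_coeffs: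
  assumes "\<forall>i\<in>set L. u i \<in> grass_carrier"
  shows "gcomm_prod (map u L) = coeffs (commutator_prod (map (\<lambda>i. Abs_grassmann (u i)) L))"
proof -
  have "map u L = map coeffs (map (\<lambda>i. Abs_grassmann (u i)) L)"
    using assms by simp
  then show ?thesis by (simp only: gcomm_prod_map_coeffs)
qed

lemma g_poly_one: "g_poly w 1 = w 1"
proof -
  have "{T. T \<subseteq> {1..1::nat} \<and> even (card T)} = {{}}"
    by (auto simp: subset_singleton_iff)
  then show ?thesis
    by (simp add: g_poly_def g_coeff_def f_term_def of_scalar_one)
qed

lemma gpoly_eq_coeffs:
  assumes "\<forall>i\<in>{1..m}. z i \<in> grass_carrier"
  shows "gpoly m z = coeffs (g_poly (\<lambda>i. Abs_grassmann (z i)) m)"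
proof (cases "m = 1")
  case True
  then have "gpoly m z = coeffs (Abs_grassmann (z 1))"
    using assms by (simp add: gpoly_def)
  then show ?thesis
    unfolding True g_poly_one .
next
  case False
  let ?w = "\<lambda>i. Abs_grassmann (z i)"
  have "fT m z T = coeffs (f_term ?w m T)" if "T \<subseteq> {1..m}" for T
  proof -
    have "map z (sorted_list_of_set ({1..m} - T)) = map coeffs (map ?w (sorted_list_of_set ({1..m} - T)))"
      "map z (sorted_list_of_set T) = map coeffs (map ?w (sorted_list_of_set T))"
      using assms that finite_subset_atLeastAtMost[OF that] by auto
    then show ?thesis
      unfolding fT_def f_term_def by (simp only: gprod_map_coeffs gcomm_prod_map_coeffs coeffs_times)
  qed
  then have "gsum (\<lambda>T. gscale (inverse ((-2) ^ (card T div 2))) (fT m z T)) {T. T \<subseteq> {1..m} \<and> even (card T)} =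
      gsum (\<lambda>T. coeffs (g_coeff T * f_term ?w m T)) {T. T \<subseteq> {1..m} \<and> even (card T)}"
    unfolding gsum_def by (intro ext sum.cong) (simp_all add: g_coeff_def coeffs_of_scalar gmult_gscale_left gmult_gone_left)
  with False show ?thesis
    unfolding gpoly_def g_poly_def gsum_coeffs by simp
qed

lemma Ek_comp_carrier: "x \<in> Ek_comp k n \<Longrightarrow> x \<in> grass_carrier"
  by (simp add: Ek_comp_def)

lemma Ek_comp_eq_gzero_if_negative:
  assumes "n < 0" "x \<in> Ek_comp k n"
  shows "x = gzero"
proof
  fix S
  show "x S = gzero S"
    using assms by (auto simp: Ek_comp_def gzero_def)
qed

lemma Ek_comp_card:
  assumes "x \<in> Ek_comp k n" "x S \<noteq> 0"
  shows "int (card S) = int (card (S \<inter> {1..k})) + n"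
proof -
  have S: "finite S" "0 \<notin> S"
    using assms grass_carrierD[OF Ek_comp_carrier] by blast+
  then have "S = (S \<inter> {1..k}) \<union> {i \<in> S. k < i}"
    by (auto simp: Suc_le_eq intro: gr0I)
  then have "card S = card (S \<inter> {1..k}) + card {i \<in> S. k < i}"
    using S(1) by (metis (no_types, lifting) card_Un_disjoint disjoint_iff finite_Un
        IntD2 atLeastAtMost_iff mem_Collect_eq not_le)
  moreover have "int (card {i \<in> S. k < i}) = n"
    using assms by (simp add: Ek_comp_def)
  ultimately show ?thesis by simp
qed

text \<open>A monomial whose length has the wrong parity for its degree must contain a generator
  of degree 0.\<close>

lemma odd_part_of_even_degree:
  assumes "\<exists>n. even n \<and> x \<in> Ek_comp k n"
  shows "odd_part (Abs_grassmann x) \<in> filtration k 1"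
  unfolding filtration_def
proof (intro CollectI allI impI)
  obtain n where x: "x \<in> Ek_comp k n" "even n"
    using assms by blast
  fix S assume "coeffs (odd_part (Abs_grassmann x)) S \<noteq> 0"
  then have "odd (card S)" "x S \<noteq> 0"
    using Ek_comp_carrier[OF x(1)] by (simp_all add: coeffs_odd_part split: if_splits)
  moreover from this(2) have "int (card S) = int (card (S \<inter> {1..k})) + n"
    by (rule Ek_comp_card[OF x(1)])
  ultimately show "1 \<le> card (S \<inter> {1..k})"
    using x(2) by presburger
qed

lemma even_part_of_odd_degree:
  assumes "\<exists>n. odd n \<and> x \<in> Ek_comp k n"
  shows "even_part (Abs_grassmann x) \<in> filtration k 1"
  unfolding filtration_def
proof (intro CollectI allI impI)
  obtain n where x: "x \<in> Ek_comp k n" "odd n"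
    using assms by blast
  fix S assume "coeffs (even_part (Abs_grassmann x)) S \<noteq> 0"
  then have "even (card S)" "x S \<noteq> 0"
    using Ek_comp_carrier[OF x(1)] by (simp_all add: coeffs_even_part split: if_splits)
  moreover from this(2) have "int (card S) = int (card (S \<inter> {1..k})) + n"
    by (rule Ek_comp_card[OF x(1)])
  ultimately show "1 \<le> card (S \<inter> {1..k})"
    using x(2) by presburger
qed

lemma commutator_prod_Ek_comp_even_mem_filtration:
  assumes "\<forall>i\<in>set L. \<exists>n. even n \<and> u i \<in> Ek_comp k n"
  shows "commutator_prod (map (\<lambda>i. Abs_grassmann (u i)) L) \<in> filtration k (2 * (length L div 2))"
  using commutator_prod_mem_filtration_odd_parts[of "map (\<lambda>i. Abs_grassmann (u i)) L" k]
    assms odd_part_of_even_degree by fastforce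

lemma g_poly_Ek_comp_odd_mem_filtration:
  assumes "\<forall>i\<in>{1..m}. \<exists>n. odd n \<and> z i \<in> Ek_comp k n"
  shows "g_poly (\<lambda>i. Abs_grassmann (z i) :: 'a::field_char_0 grassmann) m \<in> filtration k (m - 1)"
  using assms even_part_of_odd_degree by (blast intro: g_poly_mem_filtration)

lemma gcomm_gcomm_eq_gzero:
  assumes "x \<in> grass_carrier" "y \<in> grass_carrier" "z \<in> grass_carrier"
  shows "gcomm (gcomm x y) z = gzero"
proof -
  have "gcomm (gcomm x y) z =
      coeffs (commutator (commutator (Abs_grassmann x) (Abs_grassmann y)) (Abs_grassmann z))"
    using assms by (simp add: gcomm_eq_coeffs)
  also have "\<dots> = gzero"
    by (simp add: commutator_central_left central_commutator)
  finally show ?thesis .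
qed

lemma coeffs_eq_gzero_if_filtration: "x \<in> filtration k r \<Longrightarrow> k < r \<Longrightarrow> coeffs x = gzero"
  using filtration_eq_zero by fastforce

lemma gcomm_prod_mult_gcomm_eq_gzero:
  assumes y: "\<forall>i\<in>set L. \<exists>n. even n \<and> y i \<in> Ek_comp k n"
    and v: "\<exists>n. even n \<and> v \<in> Ek_comp k n" and x: "x \<in> grass_carrier"
    and deg: "k < 2 * (length L div 2) + 1"
  shows "gmult (gcomm_prod (map y L)) (gcomm v x) = gzero"
proof -
  let ?c = "commutator_prod (map (\<lambda>i. Abs_grassmann (y i)) L)"
  let ?d = "commutator (Abs_grassmann v) (Abs_grassmann x)"
  have c: "?c \<in> filtration k (2 * (length L div 2))"
    using y by (rule commutator_prod_Ek_comp_even_mem_filtration)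
  have d: "?d \<in> filtration k (1 + 0)"
    using odd_part_of_even_degree[OF v] by (intro commutator_mem_filtration) simp_all
  have "coeffs (?c * ?d) = gzero"
    by (intro coeffs_eq_gzero_if_filtration[OF filtration_mult[OF c d]]) (use deg in simp)
  moreover have "\<forall>i\<in>set L. y i \<in> grass_carrier"
    using y by (auto dest: Ek_comp_carrier)
  moreover have "v \<in> grass_carrier" "x \<in> grass_carrier"
    using v x by (auto dest: Ek_comp_carrier)
  ultimately show ?thesis
    by (simp add: gcomm_prod_eq_coeffs gcomm_eq_coeffs)
qed

lemma gcomm_prod_mult_gcomm_even_eq_gzero:
  assumes y: "\<forall>i\<in>set L. \<exists>n. even n \<and> y i \<in> Ek_comp k n"
    and v: "\<exists>n. even n \<and> v \<in> Ek_comp k n" and x: "\<exists>n. even n \<and> x \<in> Ek_comp k n"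
    and deg: "k < 2 * (length L div 2) + 2"
  shows "gmult (gcomm_prod (map y L)) (gcomm v x) = gzero"
proof -
  let ?c = "commutator_prod (map (\<lambda>i. Abs_grassmann (y i)) L)"
  let ?d = "commutator (Abs_grassmann v) (Abs_grassmann x)"
  have c: "?c \<in> filtration k (2 * (length L div 2))"
    using y by (rule commutator_prod_Ek_comp_even_mem_filtration)
  have d: "?d \<in> filtration k (1 + 1)"
    using odd_part_of_even_degree[OF v] odd_part_of_even_degree[OF x] by (rule commutator_mem_filtration)
  have "coeffs (?c * ?d) = gzero"
    by (intro coeffs_eq_gzero_if_filtration[OF filtration_mult[OF c d]]) (use deg in simp)
  moreover have "\<forall>i\<in>set L. y i \<in> grass_carrier"
    using y by (auto dest: Ek_comp_carrier)
  moreover have "v \<in> grass_carrier" "x \<in> grass_carrier"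
    using v x by (auto dest: Ek_comp_carrier)
  ultimately show ?thesis
    by (simp add: gcomm_prod_eq_coeffs gcomm_eq_coeffs)
qed

lemma gpoly_mult_gcomm_prod_eq_gzero:
  fixes z :: "nat \<Rightarrow> 'a::field_char_0 grass"
  assumes z: "\<forall>i\<in>{1..m}. \<exists>n. odd n \<and> z i \<in> Ek_comp k n"
    and u: "\<forall>i\<in>set L. \<exists>n. even n \<and> u i \<in> Ek_comp k n"
    and deg: "k < m - 1 + 2 * (length L div 2)"
  shows "gmult (gpoly m z) (gcomm_prod (map u L)) = gzero"
proof -
  let ?g = "g_poly (\<lambda>i. Abs_grassmann (z i)) m"
  let ?c = "commutator_prod (map (\<lambda>i. Abs_grassmann (u i)) L)"
  have g: "?g \<in> filtration k (m - 1)"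
    using z by (rule g_poly_Ek_comp_odd_mem_filtration)
  have c: "?c \<in> filtration k (2 * (length L div 2))"
    using u by (rule commutator_prod_Ek_comp_even_mem_filtration)
  have "coeffs (?g * ?c) = gzero"
    by (intro coeffs_eq_gzero_if_filtration[OF filtration_mult[OF g c]]) (use deg in simp)
  moreover have "\<forall>i\<in>{1..m}. z i \<in> grass_carrier" "\<forall>i\<in>set L. u i \<in> grass_carrier"
    using z u by (auto dest: Ek_comp_carrier)
  ultimately show ?thesis
    by (simp add: gpoly_eq_coeffs gcomm_prod_eq_coeffs)
qed

lemma gcomm_gpoly_mult_gcomm_prod_eq_gzero:
  fixes z :: "nat \<Rightarrow> 'a::field_char_0 grass"
  assumes z: "\<forall>i\<in>{1..m}. \<exists>n. odd n \<and> z i \<in> Ek_comp k n"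
    and v: "\<exists>n. even n \<and> v \<in> Ek_comp k n"
    and u: "\<forall>i\<in>set L. \<exists>n. even n \<and> u i \<in> Ek_comp k n"
    and deg: "k < m + 2 * (length L div 2)"
  shows "gmult (gcomm (gpoly m z) v) (gcomm_prod (map u L)) = gzero"
proof -
  let ?g = "g_poly (\<lambda>i. Abs_grassmann (z i)) m"
  let ?d = "commutator ?g (Abs_grassmann v)"
  let ?c = "commutator_prod (map (\<lambda>i. Abs_grassmann (u i)) L)"
  have d: "?d \<in> filtration k (m - 1 + 1)"
    using odd_part_mem_filtration[OF g_poly_Ek_comp_odd_mem_filtration[OF z]]
      odd_part_of_even_degree[OF v] by (rule commutator_mem_filtration)
  have c: "?c \<in> filtration k (2 * (length L div 2))"
    using u by (rule commutator_prod_Ek_comp_even_mem_filtration)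
  have "coeffs (?d * ?c) = gzero"
    by (intro coeffs_eq_gzero_if_filtration[OF filtration_mult[OF d c]]) (use deg in arith)
  moreover have "\<forall>i\<in>{1..m}. z i \<in> grass_carrier" "\<forall>i\<in>set L. u i \<in> grass_carrier"
    using z u by (auto dest: Ek_comp_carrier)
  moreover have "v \<in> grass_carrier"
    using v by (auto dest: Ek_comp_carrier)
  ultimately show ?thesis
    by (simp add: gpoly_eq_coeffs gcomm_prod_eq_coeffs gcomm_eq_coeffs)
qed

lemma gpoly_mult_gcomm_mult_gcomm_prod_eq_gzero:
  fixes z :: "nat \<Rightarrow> 'a::field_char_0 grass"
  assumes z: "\<forall>i\<in>{1..m}. \<exists>n. odd n \<and> z i \<in> Ek_comp k n"
    and x: "x \<in> grass_carrier" and v: "\<exists>n. even n \<and> v \<in> Ek_comp k n"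
    and u: "\<forall>i\<in>set L. \<exists>n. even n \<and> u i \<in> Ek_comp k n"
    and deg: "k < m + 2 * (length L div 2)"
  shows "gmult (gmult (gpoly m z) (gcomm x v)) (gcomm_prod (map u L)) = gzero"
proof -
  let ?g = "g_poly (\<lambda>i. Abs_grassmann (z i)) m"
  let ?d = "commutator (Abs_grassmann x) (Abs_grassmann v)"
  let ?c = "commutator_prod (map (\<lambda>i. Abs_grassmann (u i)) L)"
  have g: "?g \<in> filtration k (m - 1)"
    using z by (rule g_poly_Ek_comp_odd_mem_filtration)
  have d: "?d \<in> filtration k (0 + 1)"
    using odd_part_of_even_degree[OF v] by (intro commutator_mem_filtration) simp_all
  have c: "?c \<in> filtration k (2 * (length L div 2))"
    using u by (rule commutator_prod_Ek_comp_even_mem_filtration)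
  have "coeffs (?g * ?d * ?c) = gzero"
    by (intro coeffs_eq_gzero_if_filtration[OF filtration_mult[OF filtration_mult[OF g d] c]])
      (use deg in arith)
  moreover have "\<forall>i\<in>{1..m}. z i \<in> grass_carrier" "\<forall>i\<in>set L. u i \<in> grass_carrier"
    using z u by (auto dest: Ek_comp_carrier)
  moreover have "v \<in> grass_carrier"
    using v by (auto dest: Ek_comp_carrier)
  ultimately show ?thesis
    using x by (simp add: gpoly_eq_coeffs gcomm_prod_eq_coeffs gcomm_eq_coeffs)
qed

theorem mainTheorem13:
  fixes k :: nat
  assumes "0 < k"
  shows
   \<comment> \<open>(1)\<close>
   "(\<forall>n::int. n < 0 \<longrightarrow> (\<forall>x \<in> (Ek_comp k n :: 'a::field_char_0 grass set). x = gzero))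
   \<comment> \<open>(2)\<close>
  \<and> (\<forall>n1 n2 n3 :: int. \<forall>x1 \<in> (Ek_comp k n1 :: 'a grass set). \<forall>x2 \<in> Ek_comp k n2.
       \<forall>x3 \<in> Ek_comp k n3. gcomm (gcomm x1 x2) x3 = gzero)
   \<comment> \<open>(3)\<close>
  \<and> (even k \<longrightarrow> (\<forall>(y :: nat \<Rightarrow> 'a grass) n x.
       (\<forall>i \<in> {1..k+1}. y i \<in> Ek_comp k 0) \<longrightarrow> x \<in> Ek_comp k n \<longrightarrow>
       gmult (gcomm_prod (map y [1..<k+1])) (gcomm (y (k+1)) x) = gzero))
   \<comment> \<open>(4)\<close>
  \<and> (odd k \<longrightarrow> (\<forall>(y :: nat \<Rightarrow> 'a grass).
       (\<forall>i \<in> {1..k+1}. y i \<in> Ek_comp k 0) \<longrightarrow>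
       gmult (gcomm_prod (map y [1..<k])) (gcomm (y k) (y (k+1))) = gzero))
   \<comment> \<open>(5)\<close>
  \<and> (\<forall>l (z :: nat \<Rightarrow> 'a grass) (u :: nat \<Rightarrow> 'a grass). l \<le> k \<longrightarrow> even l \<longrightarrow>
       (\<forall>i \<in> {1..k-l+2}. \<exists>n. 0 < n \<and> odd n \<and> z i \<in> Ek_comp k n) \<longrightarrow>
       (\<forall>i \<in> {1..l}. \<exists>n. 0 \<le> n \<and> even n \<and> u i \<in> Ek_comp k n) \<longrightarrow>
       gmult (gpoly (k-l+2) z) (gcomm_prod (map u [1..<l+1])) = gzero)
   \<comment> \<open>(6)\<close>
  \<and> (\<forall>l (z :: nat \<Rightarrow> 'a grass) (u :: nat \<Rightarrow> 'a grass). l \<le> k \<longrightarrow> odd l \<longrightarrow>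
       (\<forall>i \<in> {1..k-l+2}. \<exists>n. 0 < n \<and> odd n \<and> z i \<in> Ek_comp k n) \<longrightarrow>
       (\<forall>i \<in> {1..l}. \<exists>n. 0 \<le> n \<and> even n \<and> u i \<in> Ek_comp k n) \<longrightarrow>
       gmult (gcomm (gpoly (k-l+2) z) (u 1)) (gcomm_prod (map u [2..<l+1])) = gzero)
   \<comment> \<open>(7)\<close>
  \<and> (\<forall>l (z :: nat \<Rightarrow> 'a grass) (u :: nat \<Rightarrow> 'a grass). l \<le> k \<longrightarrow> odd l \<longrightarrow>
       (\<forall>i \<in> {1..k-l+3}. \<exists>n. 0 < n \<and> odd n \<and> z i \<in> Ek_comp k n) \<longrightarrow>
       (\<forall>i \<in> {1..l}. \<exists>n. 0 \<le> n \<and> even n \<and> u i \<in> Ek_comp k n) \<longrightarrow>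
       gmult (gmult (gpoly (k-l+2) z) (gcomm (z (k-l+3)) (u 1)))
             (gcomm_prod (map u [2..<l+1])) = gzero)"
  apply (intro conjI allI impI ballI)
  subgoal by (rule Ek_comp_eq_gzero_if_negative)
  subgoal by (intro gcomm_gcomm_eq_gzero Ek_comp_carrier)
  subgoal by (rule gcomm_prod_mult_gcomm_eq_gzero[where k=k]) (auto dest: Ek_comp_carrier)
  subgoal by (rule gcomm_prod_mult_gcomm_even_eq_gzero[where k=k]) (use assms in auto)
  subgoal by (rule gpoly_mult_gcomm_prod_eq_gzero[where k=k]) auto
  subgoal for l
    by (rule gcomm_gpoly_mult_gcomm_prod_eq_gzero[where k=k]) (use odd_pos[of l] in auto)
  subgoal for l
    by (rule gpoly_mult_gcomm_mult_gcomm_prod_eq_gzero[where k=k])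
      (use odd_pos[of l] in \<open>auto dest: Ek_comp_carrier\<close>)
  done

end
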